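(* Let $\mathcal{T}$ be an unweighted tree on $L$ vertices such that (a) there is a vertex of degree $\ge 2$ from which all leaves are at the same distance, and (b) every other non-leaf vertex has degree $\ge 3$ (e.g. a complete binary tree). Let $f:\mathbb{N}\to\mathbb{R}$ be arbitrary. Then for every $\mathbf{x}\in\mathbb{R}^L$, the product $\mathbf{M}\mathbf{x}$ with $\mathbf{M} = [f(\mathrm{dist}_{\mathcal{T}}(i,j))]_{i,j=1,\dots,L}$ can be computed in time $O(L\log L)$.
   Context: $\mathrm{dist}_{\mathcal{T}}(i,j)$ is the number of edges on the path between $i$ and $j$. Values of $f$ are assumed available in $O(1)$ time each; time counts arithmetic operations. *)

theory Defs
  imports "HOL-Analysis.Analysis"
begin

definition simple_graph :: "nat \<Rightarrow> (nat \<Rightarrow> nat \<Rightarrow> bool) \<Rightarrow> bool" where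
  "simple_graph L E \<longleftrightarrow> (\<forall>u v. E u v \<longrightarrow> u < L \<and> v < L \<and> u \<noteq> v \<and> E v u)"

definition is_walk :: "(nat \<Rightarrow> nat \<Rightarrow> bool) \<Rightarrow> nat list \<Rightarrow> bool" where
  "is_walk E xs \<longleftrightarrow> xs \<noteq> [] \<and> (\<forall>i. Suc i < length xs \<longrightarrow> E (xs ! i) (xs ! Suc i))"

definition graph_connected :: "nat \<Rightarrow> (nat \<Rightarrow> nat \<Rightarrow> bool) \<Rightarrow> bool" where
  "graph_connected L E \<longleftrightarrow>
     (\<forall>u v. u < L \<longrightarrow> v < L \<longrightarrow> (\<exists>xs. is_walk E xs \<and> hd xs = u \<and> last xs = v))"

definition has_cycle :: "(nat \<Rightarrow> nat \<Rightarrow> bool) \<Rightarrow> bool" where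
  "has_cycle E \<longleftrightarrow> (\<exists>xs. length xs \<ge> 3 \<and> distinct xs \<and> is_walk E xs \<and> E (last xs) (hd xs))"

definition is_tree :: "nat \<Rightarrow> (nat \<Rightarrow> nat \<Rightarrow> bool) \<Rightarrow> bool" where
  "is_tree L E \<longleftrightarrow> L \<ge> 1 \<and> simple_graph L E \<and> graph_connected L E \<and> \<not> has_cycle E"

definition degree :: "nat \<Rightarrow> (nat \<Rightarrow> nat \<Rightarrow> bool) \<Rightarrow> nat \<Rightarrow> nat" where
  "degree L E v = card {u. u < L \<and> E v u}"

definition is_leaf :: "nat \<Rightarrow> (nat \<Rightarrow> nat \<Rightarrow> bool) \<Rightarrow> nat \<Rightarrow> bool" where
  "is_leaf L E v \<longleftrightarrow> v < L \<and> degree L E v = 1"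

definition tree_dist :: "(nat \<Rightarrow> nat \<Rightarrow> bool) \<Rightarrow> nat \<Rightarrow> nat \<Rightarrow> nat" where
  "tree_dist E i j = (LEAST k. \<exists>xs. is_walk E xs \<and> hd xs = i \<and> last xs = j \<and> length xs = Suc k)"

definition good_tree :: "nat \<Rightarrow> (nat \<Rightarrow> nat \<Rightarrow> bool) \<Rightarrow> bool" where
  "good_tree L E \<longleftrightarrow> is_tree L E \<and>
     (\<exists>r < L. degree L E r \<ge> 2 \<and>
        (\<exists>h. \<forall>v. is_leaf L E v \<longrightarrow> tree_dist E r v = h) \<and>
        (\<forall>v < L. v \<noteq> r \<and> \<not> is_leaf L E v \<longrightarrow> degree L E v \<ge> 3))"

text \<open>Each instruction appends one new real value to the memory, computed from earlier
  memory cells (or a constant); cost = number of instructions = number of arithmetic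
  operations.\<close>

datatype instr = Add nat nat | Sub nat nat | Mul nat nat | Div nat nat | Const real

fun step :: "real list \<Rightarrow> instr \<Rightarrow> real list" where
  "step m (Add a b) = m @ [m ! a + m ! b]"
| "step m (Sub a b) = m @ [m ! a - m ! b]"
| "step m (Mul a b) = m @ [m ! a * m ! b]"
| "step m (Div a b) = m @ [m ! a / m ! b]"
| "step m (Const c) = m @ [c]"

definition run :: "instr list \<Rightarrow> real list \<Rightarrow> real list" where
  "run p inp = foldl step inp p"

end

theory Submission
  imports Defs
begin

(*
  Write (M x) i = \<Sum>d. f d * S d i, where S d i is the sum of x over the sphere of radius d
  around i.  Root the tree at the centre r and let H be its height, so only the radii d \<le> 2 H
  occur.  Let D k v be the sum of x over the vertices k levels below v in the subtree of v.  Then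
  D (k + 1) v is the sum of D k c over the children c of v, S d r = D d r, and for v \<noteq> r with
  parent p a vertex at distance d from v either lies below v or is reached through p, whence
  S d v = D d v + S (d - 1) p - D (d - 2) v.  Evaluating these recursions for all d \<le> 2 H and
  then the outputs costs O(H L) operations.  By (a) and (b) every vertex above the leaf level has
  at least two children, so the levels at least double and 2 ^ H < L, i.e. H \<le> log L.
*)

section \<open>Straight-line programs compiled from arithmetic expressions\<close>

lemma run_Nil [simp]: "run [] m = m"
  by (simp add: run_def)

lemma run_Cons [simp]: "run (i # p) m = run p (step m i)"
  by (simp add: run_def)

lemma run_append [simp]: "run (p @ q) m = run q (run p m)"
  by (simp add: run_def)

lemma length_step [simp]: "length (step m i) = Suc (length m)"
  by (cases i) auto

lemma length_run [simp]: "length (run p m) = length m + length p"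
  by (induction p arbitrary: m) auto

lemma nth_step_prefix: "k < length m \<Longrightarrow> step m i ! k = m ! k"
  by (cases i) (auto simp: nth_append)

lemma nth_run_prefix: "k < length m \<Longrightarrow> run p m ! k = m ! k"
  by (induction p arbitrary: m) (auto simp: nth_step_prefix)

datatype binop = BAdd | BSub | BMul

fun binop_instr :: "binop \<Rightarrow> nat \<Rightarrow> nat \<Rightarrow> instr" where
  "binop_instr BAdd = Add"
| "binop_instr BSub = Sub"
| "binop_instr BMul = Mul"

fun binop_val :: "binop \<Rightarrow> real \<Rightarrow> real \<Rightarrow> real" where
  "binop_val BAdd = (+)"
| "binop_val BSub = (-)"
| "binop_val BMul = (*)"

lemma step_binop_instr: "step m (binop_instr b i j) = m @ [binop_val b (m ! i) (m ! j)]"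
  by (cases b) auto

datatype 'k aexp = Var 'k | Num real | Bin binop "'k aexp" "'k aexp"

fun eval_aexp :: "('k \<Rightarrow> real) \<Rightarrow> 'k aexp \<Rightarrow> real" where
  "eval_aexp g (Var k) = g k"
| "eval_aexp g (Num c) = c"
| "eval_aexp g (Bin b e1 e2) = binop_val b (eval_aexp g e1) (eval_aexp g e2)"

fun vars_aexp :: "'k aexp \<Rightarrow> 'k set" where
  "vars_aexp (Var k) = {k}"
| "vars_aexp (Num c) = {}"
| "vars_aexp (Bin b e1 e2) = vars_aexp e1 \<union> vars_aexp e2"

fun ops_aexp :: "'k aexp \<Rightarrow> nat" where
  "ops_aexp (Var k) = 0"
| "ops_aexp (Num c) = 1"
| "ops_aexp (Bin b e1 e2) = ops_aexp e1 + ops_aexp e2 + 1"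

fun compile_aexp :: "('k \<Rightarrow> nat) \<Rightarrow> nat \<Rightarrow> 'k aexp \<Rightarrow> instr list \<times> nat" where
  "compile_aexp a n (Var k) = ([], a k)"
| "compile_aexp a n (Num c) = ([Const c], n)"
| "compile_aexp a n (Bin b e1 e2) =
     (let (p1, i1) = compile_aexp a n e1;
          (p2, i2) = compile_aexp a (n + length p1) e2
      in (p1 @ p2 @ [binop_instr b i1 i2], n + length p1 + length p2))"

lemma length_compile_aexp [simp]: "length (fst (compile_aexp a n e)) = ops_aexp e"
  by (induction e arbitrary: n) (auto simp: case_prod_beta Let_def)

lemma run_compile_aexp:
  assumes "compile_aexp a (length m) e = (p, i)"
    and "\<forall>k\<in>vars_aexp e. a k < length m \<and> m ! a k = g k"
  shows "i < length (run p m) \<and> run p m ! i = eval_aexp g e"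
  using assms
proof (induction e arbitrary: m p i)
  case (Bin b e1 e2)
  obtain p1 i1 where c1: "compile_aexp a (length m) e1 = (p1, i1)" by fastforce
  define m1 where "m1 = run p1 m"
  obtain p2 i2 where c2: "compile_aexp a (length m1) e2 = (p2, i2)" by fastforce
  define m2 where "m2 = run p2 m1"
  have p: "p = p1 @ p2 @ [binop_instr b i1 i2]" and i: "i = length m2"
    using Bin.prems(1) c1 c2 by (auto simp: m1_def m2_def)
  have v1: "i1 < length m1 \<and> m1 ! i1 = eval_aexp g e1"
    using Bin.IH(1)[OF c1] Bin.prems(2) unfolding m1_def by auto
  have "\<forall>k\<in>vars_aexp e2. a k < length m1 \<and> m1 ! a k = g k"
    using Bin.prems(2) by (auto simp: m1_def nth_run_prefix intro: trans_less_add1)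
  then have v2: "i2 < length m2 \<and> m2 ! i2 = eval_aexp g e2"
    using Bin.IH(2)[OF c2] unfolding m2_def by auto
  have "m2 ! i1 = eval_aexp g e1"
    using v1 by (simp add: m2_def nth_run_prefix)
  then show ?case
    using v2 by (simp add: p i m1_def m2_def step_binop_instr nth_append)
qed auto

definition sum_aexp :: "'k aexp list \<Rightarrow> 'k aexp" where
  "sum_aexp es = foldr (Bin BAdd) es (Num 0)"

lemma eval_sum_aexp [simp]: "eval_aexp g (sum_aexp es) = (\<Sum>e\<leftarrow>es. eval_aexp g e)"
  by (induction es) (auto simp: sum_aexp_def)

lemma vars_sum_aexp [simp]: "vars_aexp (sum_aexp es) = (\<Union>e\<in>set es. vars_aexp e)"
  by (induction es) (auto simp: sum_aexp_def)

lemma ops_sum_aexp [simp]: "ops_aexp (sum_aexp es) = (\<Sum>e\<leftarrow>es. ops_aexp e) + length es + 1"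
  by (induction es) (auto simp: sum_aexp_def)

fun compile_defs :: "('k \<Rightarrow> nat) \<Rightarrow> nat \<Rightarrow> ('k \<times> 'k aexp) list \<Rightarrow> instr list \<times> ('k \<Rightarrow> nat)" where
  "compile_defs a n [] = ([], a)"
| "compile_defs a n ((k, e) # ds) =
     (let (p, i) = compile_aexp a n e;
          (q, a') = compile_defs (a(k := i)) (n + length p) ds
      in (p @ q, a'))"

lemma length_compile_defs: "length (fst (compile_defs a n ds)) = (\<Sum>(k, e)\<leftarrow>ds. ops_aexp e)"
proof (induction ds arbitrary: a n)
  case (Cons d ds)
  then show ?case
    using length_compile_aexp by (cases d) (auto simp: case_prod_beta Let_def)
qed simp

fun defs_valid :: "('k \<Rightarrow> real) \<Rightarrow> 'k set \<Rightarrow> ('k \<times> 'k aexp) list \<Rightarrow> bool" where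
  "defs_valid g K [] \<longleftrightarrow> True"
| "defs_valid g K ((k, e) # ds) \<longleftrightarrow>
     vars_aexp e \<subseteq> K \<and> eval_aexp g e = g k \<and> defs_valid g (insert k K) ds"

lemma run_compile_defs:
  assumes "compile_defs a (length m) ds = (p, a')"
    and "\<forall>k\<in>K. a k < length m \<and> m ! a k = g k"
    and "defs_valid g K ds"
  shows "\<forall>k\<in>K \<union> fst ` set ds. a' k < length (run p m) \<and> run p m ! a' k = g k"
  using assms
proof (induction ds arbitrary: a m p a' K)
  case (Cons d ds)
  obtain k e where d: "d = (k, e)" by fastforce
  obtain p1 i where c1: "compile_aexp a (length m) e = (p1, i)" by fastforce
  define m1 where "m1 = run p1 m"
  obtain q where c2: "compile_defs (a(k := i)) (length m1) ds = (q, a')" and p: "p = p1 @ q"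
    using Cons.prems(1) c1 by (auto simp: d m1_def split: prod.splits)
  have valid: "vars_aexp e \<subseteq> K" "eval_aexp g e = g k" "defs_valid g (insert k K) ds"
    using Cons.prems(3) by (auto simp: d)
  have "\<forall>k'\<in>vars_aexp e. a k' < length m \<and> m ! a k' = g k'"
    using Cons.prems(2) valid(1) by blast
  from run_compile_aexp[OF c1 this] valid(2) have "i < length m1 \<and> m1 ! i = g k"
    by (simp add: m1_def)
  moreover have "\<forall>k'\<in>K. a k' < length m1 \<and> m1 ! a k' = g k'"
    using Cons.prems(2) by (auto simp: m1_def nth_run_prefix intro: trans_less_add1)
  ultimately have "\<forall>k'\<in>insert k K. (a(k := i)) k' < length m1 \<and> m1 ! (a(k := i)) k' = g k'"
    by auto
  from Cons.IH[OF c2 this valid(3)] show ?case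
    by (auto simp: p d m1_def)
qed simp

lemma defs_valid_mono: "defs_valid g K ds \<Longrightarrow> K \<subseteq> K' \<Longrightarrow> defs_valid g K' ds"
proof (induction ds arbitrary: K K')
  case (Cons d ds)
  then show ?case by (cases d) (simp; meson Cons.IH insert_mono subset_trans)
qed simp

lemma defs_valid_append:
  "defs_valid g K (ds @ ds') \<longleftrightarrow> defs_valid g K ds \<and> defs_valid g (K \<union> fst ` set ds) ds'"
proof (induction ds arbitrary: K)
  case (Cons d ds)
  then show ?case by (cases d) simp
qed simp

lemma defs_valid_independent:
  "\<forall>(k, e)\<in>set ds. vars_aexp e \<subseteq> K \<and> eval_aexp g e = g k \<Longrightarrow> defs_valid g K ds"
proof (induction ds arbitrary: K)
  case (Cons d ds)
  then show ?case by (cases d) (auto intro: defs_valid_mono)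
qed simp

lemma defs_valid_layers:
  assumes "\<forall>s<S. \<forall>(k, e)\<in>set (layer s).
             vars_aexp e \<subseteq> K \<union> (\<Union>s'<s. fst ` set (layer s')) \<and> eval_aexp g e = g k"
  shows "defs_valid g K (concat (map layer [0..<S]))"
  using assms
proof (induction S)
  case (Suc S)
  have "K \<union> fst ` set (concat (map layer [0..<S])) = K \<union> (\<Union>s'<S. fst ` set (layer s'))"
    by (auto simp: atLeast0LessThan)
  with Suc show ?case
    by (auto simp: defs_valid_append intro: defs_valid_independent)
qed simp

lemma ops_layers_le:
  assumes "\<forall>s<S. (\<Sum>(k, e)\<leftarrow>layer s. ops_aexp e) \<le> c"
  shows "(\<Sum>(k, e)\<leftarrow>concat (map layer [0..<S]). ops_aexp e) \<le> S * c"
  using assms by (induction S) (auto simp: add_mono)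

section \<open>Distances in a tree\<close>

lemma is_walk_singleton [simp]: "is_walk E [x]"
  by (simp add: is_walk_def)

lemma is_walk_Cons: "xs \<noteq> [] \<Longrightarrow> is_walk E (x # xs) \<longleftrightarrow> E x (hd xs) \<and> is_walk E xs"
  by (cases xs) (auto simp: is_walk_def nth_Cons split: nat.splits)

lemma is_walk_take: "is_walk E xs \<Longrightarrow> 0 < k \<Longrightarrow> is_walk E (take k xs)"
  by (cases xs) (auto simp: is_walk_def)

lemma is_walk_drop: "is_walk E xs \<Longrightarrow> k < length xs \<Longrightarrow> is_walk E (drop k xs)"
  by (auto simp: is_walk_def)

locale tree =
  fixes L :: nat and E :: "nat \<Rightarrow> nat \<Rightarrow> bool"
  assumes is_tree: "is_tree L E"
begin

lemma edge_sym: "E u v \<Longrightarrow> E v u"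
  and edge_vertices: "E u v \<Longrightarrow> u < L \<and> v < L \<and> u \<noteq> v"
  using is_tree by (auto simp: is_tree_def simple_graph_def)

lemma acyclic: "\<not> has_cycle E"
  using is_tree by (simp add: is_tree_def)

lemma walk_vertex: "is_walk E xs \<Longrightarrow> hd xs < L \<Longrightarrow> k < length xs \<Longrightarrow> xs ! k < L"
  by (cases k) (auto simp: is_walk_def hd_conv_nth dest: edge_vertices)

lemma tree_dist_le_walk:
  "is_walk E xs \<Longrightarrow> hd xs = u \<Longrightarrow> last xs = v \<Longrightarrow> tree_dist E u v \<le> length xs - 1"
  unfolding tree_dist_def by (rule Least_le) (auto simp: is_walk_def)

lemma geodesic_exists:
  assumes "u < L" "v < L"
  obtains xs where "is_walk E xs" "hd xs = u" "last xs = v" "length xs = Suc (tree_dist E u v)"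
proof -
  obtain xs where "is_walk E xs" "hd xs = u" "last xs = v"
    using assms is_tree by (auto simp: is_tree_def graph_connected_def)
  then have "\<exists>k xs. is_walk E xs \<and> hd xs = u \<and> last xs = v \<and> length xs = Suc k"
    by (intro exI[of _ "length xs - 1"] exI[of _ xs]) (auto simp: is_walk_def)
  from LeastI_ex[OF this[unfolded tree_dist_def[symmetric]]] show ?thesis
    using that unfolding tree_dist_def by blast
qed

lemma tree_dist_self [simp]: "tree_dist E u u = 0"
  using tree_dist_le_walk[of "[u]" u u] by simp

lemma tree_dist_eq_0_iff:
  assumes "u < L" "v < L"
  shows "tree_dist E u v = 0 \<longleftrightarrow> u = v"
proof
  assume "tree_dist E u v = 0"
  moreover obtain xs where "hd xs = u" "last xs = v" "length xs = Suc (tree_dist E u v)"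
    using assms by (metis geodesic_exists)
  ultimately show "u = v"
    by (auto simp: length_Suc_conv)
qed simp

lemma tree_dist_neighbour_le: "E u u' \<Longrightarrow> w < L \<Longrightarrow> tree_dist E u w \<le> Suc (tree_dist E u' w)"
proof -
  assume "E u u'" "w < L"
  moreover obtain ys where "is_walk E ys" "hd ys = u'" "last ys = w" "length ys = Suc (tree_dist E u' w)"
    using edge_vertices[OF \<open>E u u'\<close>] \<open>w < L\<close> by (blast elim: geodesic_exists)
  moreover have "ys \<noteq> []"
    using \<open>length ys = Suc (tree_dist E u' w)\<close> by auto
  ultimately show ?thesis
    using tree_dist_le_walk[of "u # ys" u w] by (simp add: is_walk_Cons)
qed

lemma tree_dist_edge: "E u v \<Longrightarrow> tree_dist E u v = 1"
  using tree_dist_neighbour_le[of u v v] tree_dist_eq_0_iff[of u v] edge_vertices[of u v] by simp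

lemma tree_dist_Suc_neighbour:
  assumes "u < L" "v < L" "tree_dist E u v = Suc k"
  obtains w where "E u w" "tree_dist E w v = k"
proof -
  obtain xs where xs: "is_walk E xs" "hd xs = u" "last xs = v" "length xs = Suc (Suc k)"
    using assms by (metis geodesic_exists)
  then have "E u (xs ! 1)"
    by (auto simp: is_walk_def hd_conv_nth)
  moreover have "tree_dist E (xs ! 1) v \<le> k"
    using tree_dist_le_walk[of "drop 1 xs" "xs ! 1" v] is_walk_drop[OF xs(1), of 1] xs
    by (simp add: hd_drop_conv_nth)
  moreover have "Suc k \<le> Suc (tree_dist E (xs ! 1) v)"
    using tree_dist_neighbour_le[OF \<open>E u (xs ! 1)\<close> \<open>v < L\<close>] assms(3) by simp
  ultimately show ?thesis
    using that by (metis Suc_le_mono le_antisym)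
qed

lemma tree_dist_triangle:
  "u < L \<Longrightarrow> v < L \<Longrightarrow> w < L \<Longrightarrow> tree_dist E u w \<le> tree_dist E u v + tree_dist E v w"
proof (induction "tree_dist E u v" arbitrary: u)
  case 0
  then show ?case by (simp add: tree_dist_eq_0_iff)
next
  case (Suc k)
  then obtain u' where "E u u'" "tree_dist E u' v = k"
    by (metis tree_dist_Suc_neighbour)
  with Suc show ?case
    using tree_dist_neighbour_le[of u u' w] edge_vertices[of u u'] by fastforce
qed

lemma tree_dist_sym: "u < L \<Longrightarrow> v < L \<Longrightarrow> tree_dist E u v = tree_dist E v u"
proof -
  have le: "tree_dist E v u \<le> tree_dist E u v" if "u < L" "v < L" for u v
    using that
  proof (induction "tree_dist E u v" arbitrary: u)
    case (Suc k)
    then obtain u' where u': "E u u'" "tree_dist E u' v = k"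
      by (metis tree_dist_Suc_neighbour)
    then have "tree_dist E v u \<le> tree_dist E v u' + tree_dist E u' u"
      using Suc.prems edge_vertices tree_dist_triangle by blast
    with Suc u' show ?case
      using tree_dist_edge[OF edge_sym[OF u'(1)]] edge_vertices[OF u'(1)] by fastforce
  qed (simp add: tree_dist_eq_0_iff)
  show "u < L \<Longrightarrow> v < L \<Longrightarrow> ?thesis"
    using le[of u v] le[of v u] by simp
qed

lemma geodesic_nth:
  assumes xs: "is_walk E xs" "hd xs = u" "last xs = v" "length xs = Suc (tree_dist E u v)"
    and "u < L" "k < length xs"
  shows "xs ! k < L" "tree_dist E (xs ! k) v = tree_dist E u v - k"
proof -
  show "xs ! k < L"
    using walk_vertex assms by simp
  moreover have "v < L"
    using walk_vertex[of xs "length xs - 1"] assms last_conv_nth[of xs] by fastforce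
  moreover have "tree_dist E (xs ! k) v \<le> tree_dist E u v - k"
    using tree_dist_le_walk[of "drop k xs"] is_walk_drop assms by (simp add: hd_drop_conv_nth)
  moreover have "tree_dist E u (xs ! k) \<le> k"
  proof -
    have "is_walk E (take (Suc k) xs)"
      using is_walk_take[OF xs(1)] by simp
    moreover have "hd (take (Suc k) xs) = u" "last (take (Suc k) xs) = xs ! k"
      using assms by (cases xs, simp_all add: take_Suc_conv_app_nth)
    ultimately show ?thesis
      using tree_dist_le_walk assms(6) by fastforce
  qed
  ultimately show "tree_dist E (xs ! k) v = tree_dist E u v - k"
    using tree_dist_triangle[of u "xs ! k" v] \<open>u < L\<close> by linarith
qed

lemma geodesic_distinct:
  assumes "is_walk E xs" "hd xs = u" "last xs = v" "length xs = Suc (tree_dist E u v)" "u < L"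
  shows "distinct xs"
  unfolding distinct_conv_nth
  using geodesic_nth(2)[OF assms] assms(4) by (metis diff_diff_cancel less_Suc_eq_le)

text \<open>If hd P lies on Q, then u, hd Q, ..., hd P is a cycle; otherwise pass from u to hd P,
  replacing P by tl P and Q by u # Q.\<close>

lemma two_neighbours_cycle:
  assumes "E u (hd P)" "E u (hd Q)" "hd P \<noteq> hd Q"
    and "is_walk E P" "distinct P" "u \<notin> set P"
    and "is_walk E Q" "distinct Q" "u \<notin> set Q"
    and "last P = last Q"
  shows "has_cycle E"
  using assms
proof (induction P arbitrary: u Q)
  case Nil
  then show ?case by (simp add: is_walk_def)
next
  case (Cons a P)
  have "Q \<noteq> []"
    using Cons.prems(7) by (simp add: is_walk_def)
  show ?case
  proof (cases "a \<in> set Q")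
    case True
    then obtain k where k: "k < length Q" "Q ! k = a"
      by (auto simp: in_set_conv_nth)
    with Cons.prems(3) \<open>Q \<noteq> []\<close> have "0 < k"
      by (cases k) (auto simp: hd_conv_nth)
    let ?C = "u # take (Suc k) Q"
    have "length ?C \<ge> 3" "distinct ?C"
      using k \<open>0 < k\<close> Cons.prems(8,9) by (auto dest: in_set_takeD)
    moreover have "is_walk E ?C"
      using Cons.prems(2) is_walk_take[OF Cons.prems(7)] \<open>Q \<noteq> []\<close> by (simp add: is_walk_Cons)
    moreover have "E (last ?C) (hd ?C)"
      using k Cons.prems(1) edge_sym by (simp add: take_Suc_conv_app_nth)
    ultimately show ?thesis
      unfolding has_cycle_def by blast
  next
    case False
    with Cons.prems(10) have "P \<noteq> []"
      using \<open>Q \<noteq> []\<close> by auto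
    have "a \<noteq> u"
      using Cons.prems(1) edge_vertices by force
    show ?thesis
    proof (rule Cons.IH[of a "u # Q"])
      show "E a (hd P)" "is_walk E P"
        using Cons.prems(4) \<open>P \<noteq> []\<close> by (simp_all add: is_walk_Cons)
      show "E a (hd (u # Q))"
        using Cons.prems(1) edge_sym by simp
      show "hd P \<noteq> hd (u # Q)"
        using Cons.prems(6) \<open>P \<noteq> []\<close> by (auto dest: hd_in_set)
      show "is_walk E (u # Q)"
        using Cons.prems(2,7) \<open>Q \<noteq> []\<close> by (simp add: is_walk_Cons)
      show "distinct P" "a \<notin> set P" "distinct (u # Q)" "a \<notin> set (u # Q)"
        using Cons.prems(5,8,9) False \<open>a \<noteq> u\<close> by auto
      show "last P = last (u # Q)"
        using Cons.prems(10) \<open>P \<noteq> []\<close> \<open>Q \<noteq> []\<close> by simp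
    qed
  qed
qed

text \<open>Geodesics to j from two such neighbours a and b avoid u and would close a cycle through u.\<close>

lemma neighbour_not_farther_unique:
  assumes "j < L" "E u a" "E u b"
    and "tree_dist E a j \<le> tree_dist E u j" "tree_dist E b j \<le> tree_dist E u j"
  shows "a = b"
proof (rule ccontr)
  have avoiding_geodesic: "\<exists>P. is_walk E P \<and> distinct P \<and> hd P = c \<and> last P = j \<and> u \<notin> set P"
    if c: "E u c" "tree_dist E c j \<le> tree_dist E u j" for c
  proof -
    have "c < L" "u < L" "u \<noteq> c"
      using edge_vertices[OF c(1)] by auto
    obtain P where P: "is_walk E P" "hd P = c" "last P = j" "length P = Suc (tree_dist E c j)"
      using \<open>c < L\<close> \<open>j < L\<close> by (metis geodesic_exists)
    have "u \<notin> set P"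
    proof
      assume "u \<in> set P"
      then obtain t where t: "t < length P" "P ! t = u"
        by (auto simp: in_set_conv_nth)
      then have du: "tree_dist E u j = tree_dist E c j - t"
        using geodesic_nth(2)[OF P \<open>c < L\<close> t(1)] t(2) by simp
      with c(2) have "t = 0 \<or> tree_dist E c j = 0" by linarith
      then have "u = c"
      proof
        assume "t = 0"
        with t P(2,4) show "u = c" by (cases P) auto
      next
        assume "tree_dist E c j = 0"
        with du show "u = c"
          using \<open>c < L\<close> \<open>u < L\<close> \<open>j < L\<close> by (simp add: tree_dist_eq_0_iff)
      qed
      with \<open>u \<noteq> c\<close> show False ..
    qed
    then show ?thesis
      using P geodesic_distinct[OF P \<open>c < L\<close>] by blast
  qed
  assume "a \<noteq> b"
  then have "has_cycle E"
    using avoiding_geodesic[OF assms(2,4)] avoiding_geodesic[OF assms(3,5)] assms(2,3)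
    by (metis two_neighbours_cycle)
  with acyclic show False ..
qed

lemma tree_dist_edge_cases:
  assumes "E p v" "j < L"
  shows "tree_dist E v j = Suc (tree_dist E p j) \<or> tree_dist E p j = Suc (tree_dist E v j)"
proof -
  have "p < L" "v < L" "p \<noteq> v"
    using edge_vertices[OF assms(1)] by auto
  have "tree_dist E v j \<le> Suc (tree_dist E p j)" "tree_dist E p j \<le> Suc (tree_dist E v j)"
    using tree_dist_neighbour_le assms edge_sym by blast+
  moreover have "tree_dist E p j \<noteq> tree_dist E v j"
  proof
    assume eq: "tree_dist E p j = tree_dist E v j"
    show False
    proof (cases "tree_dist E p j")
      case 0
      with eq show False
        using \<open>p < L\<close> \<open>v < L\<close> \<open>p \<noteq> v\<close> assms(2) by (simp add: tree_dist_eq_0_iff)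
    next
      case (Suc k)
      then obtain w where "E p w" "tree_dist E w j = k"
        using \<open>p < L\<close> assms(2) by (metis tree_dist_Suc_neighbour)
      then have "v = w"
        using neighbour_not_farther_unique[OF assms(2,1)] eq Suc by simp
      with eq Suc \<open>tree_dist E w j = k\<close> show False by simp
    qed
  qed
  ultimately show ?thesis by linarith
qed

end

section \<open>Descendants and spheres in a rooted tree\<close>

locale rooted_tree = tree +
  fixes r :: nat
  assumes root: "r < L"
begin

definition depth :: "nat \<Rightarrow> nat" where
  "depth v = tree_dist E v r"

definition parent :: "nat \<Rightarrow> nat" where
  "parent v = (SOME p. E v p \<and> Suc (depth p) = depth v)"

definition children :: "nat \<Rightarrow> nat list" where
  "children v = filter (\<lambda>c. E v c \<and> depth c = Suc (depth v)) [0..<L]"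

lemma depth_root [simp]: "depth r = 0"
  by (simp add: depth_def)

lemma depth_eq_0_iff: "v < L \<Longrightarrow> depth v = 0 \<longleftrightarrow> v = r"
  using root by (simp add: depth_def tree_dist_eq_0_iff)

lemma depth_edge: "E u v \<Longrightarrow> depth v = Suc (depth u) \<or> depth u = Suc (depth v)"
  unfolding depth_def using tree_dist_edge_cases[OF _ root] by blast

lemma depth_le: "v < L \<Longrightarrow> j < L \<Longrightarrow> depth j \<le> depth v + tree_dist E v j"
  unfolding depth_def using tree_dist_triangle[of j v r] tree_dist_sym[of j v] root by simp

lemma parent:
  assumes "v < L" "v \<noteq> r"
  shows "E v (parent v)" "Suc (depth (parent v)) = depth v"
proof -
  obtain k where "tree_dist E v r = Suc k"
    using assms depth_eq_0_iff by (cases "depth v") (auto simp: depth_def)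
  then obtain w where "E v w" "Suc (depth w) = depth v"
    using assms(1) root by (metis depth_def tree_dist_Suc_neighbour)
  then have "\<exists>p. E v p \<and> Suc (depth p) = depth v" by blast
  from someI_ex[OF this] show "E v (parent v)" "Suc (depth (parent v)) = depth v"
    unfolding parent_def by blast+
qed

lemma parent_unique:
  assumes "E v p" "Suc (depth p) = depth v"
  shows "p = parent v"
proof -
  have "v < L" "v \<noteq> r"
    using assms edge_vertices by auto
  then show ?thesis
    using neighbour_not_farther_unique[OF root assms(1) parent(1)] assms(2) parent(2)[of v]
    unfolding depth_def by simp
qed

lemma set_children: "c \<in> set (children v) \<longleftrightarrow> E v c \<and> depth c = Suc (depth v)"
  by (auto simp: children_def dest: edge_vertices)

lemma distinct_children: "distinct (children v)"
  by (simp add: children_def)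

lemma parent_child: "c \<in> set (children v) \<Longrightarrow> parent c = v"
  by (metis set_children parent_unique edge_sym)

lemma neighbour_cases: "E u w \<Longrightarrow> w \<in> set (children u) \<or> u \<noteq> r \<and> w = parent u"
  using depth_edge[of u w] parent_unique[of u w] by (auto simp: set_children)

lemma tree_dist_parent_Suc_iff:
  assumes "v < L" "v \<noteq> r" "j < L"
  shows "tree_dist E (parent v) j = Suc (tree_dist E v j) \<longleftrightarrow>
         depth j = depth v + tree_dist E v j"
proof
  assume below: "depth j = depth v + tree_dist E v j"
  have "depth j \<le> depth (parent v) + tree_dist E (parent v) j"
    using depth_le[OF _ assms(3)] parent(1)[OF assms(1,2)] edge_vertices by blast
  then show "tree_dist E (parent v) j = Suc (tree_dist E v j)"
    using tree_dist_edge_cases[OF edge_sym[OF parent(1)[OF assms(1,2)]] assms(3)]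
      parent(2)[OF assms(1,2)] below by linarith
next
  show "tree_dist E (parent v) j = Suc (tree_dist E v j) \<Longrightarrow> depth j = depth v + tree_dist E v j"
    using assms(1,2)
  proof (induction "tree_dist E v j" arbitrary: v)
    case 0
    then show ?case by (simp add: tree_dist_eq_0_iff \<open>j < L\<close>)
  next
    case (Suc k)
    obtain w where w: "E v w" "tree_dist E w j = k"
      using Suc.hyps(2) Suc.prems(2) \<open>j < L\<close> by (metis tree_dist_Suc_neighbour)
    have "w \<noteq> parent v"
      using w(2) Suc.hyps(2) Suc.prems(1) by auto
    then have child: "w \<in> set (children v)"
      using neighbour_cases[OF w(1)] by blast
    then have "w < L" "w \<noteq> r" "parent w = v"
      using parent_child edge_vertices by (auto simp: set_children)
    then have "depth j = depth w + k"
      using Suc.hyps(1)[of w] w(2) Suc.hyps(2) by simp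
    then show ?case
      using child Suc.hyps(2) by (simp add: set_children)
  qed
qed

text \<open>j lies below v iff v is on the path from j to the root, i.e. iff
  depth j = depth v + tree_dist E v j.\<close>

definition descendants_at :: "nat \<Rightarrow> nat \<Rightarrow> nat set" where
  "descendants_at k v = {j. j < L \<and> tree_dist E v j = k \<and> depth j = depth v + k}"

definition tree_sphere :: "nat \<Rightarrow> nat \<Rightarrow> nat set" where
  "tree_sphere d v = {j. j < L \<and> tree_dist E v j = d}"

lemma finite_descendants_at [simp]: "finite (descendants_at k v)"
  by (simp add: descendants_at_def)

lemma finite_tree_sphere [simp]: "finite (tree_sphere d v)"
  by (simp add: tree_sphere_def)

lemma descendants_at_0: "v < L \<Longrightarrow> descendants_at 0 v = {v}"
  by (auto simp: descendants_at_def tree_dist_eq_0_iff)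

lemma tree_sphere_0: "v < L \<Longrightarrow> tree_sphere 0 v = {v}"
  by (auto simp: tree_sphere_def tree_dist_eq_0_iff)

lemma tree_sphere_root: "tree_sphere d r = descendants_at d r"
  using root by (auto simp: tree_sphere_def descendants_at_def depth_def tree_dist_sym)

lemma descendants_at_Suc: "v < L \<Longrightarrow> descendants_at (Suc k) v = (\<Union>c\<in>set (children v). descendants_at k c)"
proof (intro equalityI subsetI)
  fix j assume "v < L" "j \<in> descendants_at (Suc k) v"
  then have j: "j < L" "tree_dist E v j = Suc k" "depth j = depth v + Suc k"
    by (auto simp: descendants_at_def)
  then obtain w where w: "E v w" "tree_dist E w j = k"
    using \<open>v < L\<close> by (metis tree_dist_Suc_neighbour)
  then have "depth j \<le> depth w + k"
    using depth_le edge_vertices j(1) by fastforce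
  then have "depth w = Suc (depth v)"
    using depth_edge[OF w(1)] j(3) by linarith
  with w j show "j \<in> (\<Union>c\<in>set (children v). descendants_at k c)"
    by (auto simp: descendants_at_def set_children)
next
  fix j assume "v < L" "j \<in> (\<Union>c\<in>set (children v). descendants_at k c)"
  then obtain c where c: "E v c" "depth c = Suc (depth v)"
    and j: "j < L" "tree_dist E c j = k" "depth j = depth c + k"
    by (auto simp: descendants_at_def set_children)
  have "tree_dist E v j \<le> Suc k"
    using tree_dist_neighbour_le[OF c(1) j(1)] j(2) by simp
  moreover have "depth j \<le> depth v + tree_dist E v j"
    using depth_le[OF \<open>v < L\<close> j(1)] .
  ultimately show "j \<in> descendants_at (Suc k) v"
    using c(2) j by (simp add: descendants_at_def)
qed

lemma sum_descendants_at_Suc: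
  assumes "v < L"
  shows "sum x (descendants_at (Suc k) v) = (\<Sum>c\<leftarrow>children v. sum x (descendants_at k c))"
proof -
  have "descendants_at k c1 \<inter> descendants_at k c2 = {}"
    if c: "c1 \<in> set (children v)" "c2 \<in> set (children v)" "c1 \<noteq> c2" for c1 c2
  proof (rule ccontr)
    assume "descendants_at k c1 \<inter> descendants_at k c2 \<noteq> {}"
    then obtain j where "j \<in> descendants_at k c1" "j \<in> descendants_at k c2" by blast
    moreover from this have "j \<in> descendants_at (Suc k) v"
      using descendants_at_Suc[OF assms] c by blast
    ultimately have "c1 = c2"
      using neighbour_not_farther_unique[of j v c1 c2] c
      by (auto simp: descendants_at_def set_children)
    with c(3) show False ..
  qed
  then show ?thesis
    by (simp add: descendants_at_Suc[OF assms] sum.UNION_disjoint sum_list_distinct_conv_sum_set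
        distinct_children)
qed

lemma sum_tree_sphere_step:
  fixes x :: "nat \<Rightarrow> 'a::ab_group_add"
  assumes "v < L" "v \<noteq> r" "1 \<le> d"
  shows "sum x (tree_sphere d v) = sum x (descendants_at d v) + sum x (tree_sphere (d - 1) (parent v))
           - (if 2 \<le> d then sum x (descendants_at (d - 2) v) else 0)"
proof -
  define p where "p = parent v"
  \<comment> \<open>B is the part of the sphere around v not below v; it is also the part of the sphere of
    radius d - 1 around p not below v, whose remainder C lies below v at distance d - 2.\<close>
  define B where "B = {j. j < L \<and> tree_dist E v j = d \<and> depth j \<noteq> depth v + d}"
  define C where "C = (if 2 \<le> d then descendants_at (d - 2) v else {})"
  have cases: "tree_dist E p j = Suc (tree_dist E v j) \<and> depth j = depth v + tree_dist E v j \<or>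
      tree_dist E v j = Suc (tree_dist E p j) \<and> depth j \<noteq> depth v + tree_dist E v j"
    if "j < L" for j
    using tree_dist_edge_cases[OF edge_sym[OF parent(1)[OF assms(1,2)]] that]
      tree_dist_parent_Suc_iff[OF assms(1,2) that] by (auto simp: p_def)
  have "tree_sphere d v = descendants_at d v \<union> B" "descendants_at d v \<inter> B = {}"
    by (auto simp: B_def tree_sphere_def descendants_at_def)
  then have sum_v: "sum x (tree_sphere d v) = sum x (descendants_at d v) + sum x B"
    by (simp add: sum.union_disjoint B_def)
  have "tree_sphere (d - 1) p = B \<union> C"
  proof (intro equalityI subsetI)
    fix j assume "j \<in> tree_sphere (d - 1) p"
    then have "j < L" "tree_dist E p j = d - 1"
      by (auto simp: tree_sphere_def)
    then show "j \<in> B \<union> C"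
      using cases[of j] assms(3) by (auto simp: B_def C_def descendants_at_def)
  next
    fix j assume "j \<in> B \<union> C"
    then show "j \<in> tree_sphere (d - 1) p"
      using cases[of j] by (auto simp: B_def C_def descendants_at_def tree_sphere_def split: if_splits)
  qed
  moreover have "B \<inter> C = {}"
    by (auto simp: B_def C_def descendants_at_def)
  ultimately have "sum x (tree_sphere (d - 1) p) = sum x B + sum x C"
    by (simp add: sum.union_disjoint B_def C_def)
  with sum_v show ?thesis
    by (simp add: p_def C_def)
qed

lemma sum_length_children: "(\<Sum>v<L. length (children v)) \<le> L"
proof -
  have "(\<Sum>v<L. length (children v)) = (\<Sum>v<L. card (set (children v)))"
    by (simp add: distinct_card distinct_children)
  also have "\<dots> = card (\<Union>v<L. set (children v))"
    by (rule card_UN_disjoint[symmetric]) (auto dest: parent_child)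
  also have "\<dots> \<le> card {..<L}"
    by (rule card_mono) (auto simp: set_children dest: edge_vertices)
  finally show ?thesis by simp
qed

end

section \<open>Height of a balanced tree\<close>

locale balanced_tree = rooted_tree +
  fixes h :: nat
  assumes root_degree: "2 \<le> degree L E r"
    and leaf_depth: "\<And>v. is_leaf L E v \<Longrightarrow> tree_dist E r v = h"
    and inner_degree: "\<And>v. v < L \<Longrightarrow> v \<noteq> r \<Longrightarrow> \<not> is_leaf L E v \<Longrightarrow> 3 \<le> degree L E v"
begin

definition height :: nat where
  "height = Max (depth ` {..<L})"

definition level :: "nat \<Rightarrow> nat set" where
  "level t = {u. u < L \<and> depth u = t}"

lemma depth_le_height: "v < L \<Longrightarrow> depth v \<le> height"
  by (simp add: height_def)

lemma degree_le_children:
  assumes "u < L"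
  shows "degree L E u \<le> length (children u) + (if u = r then 0 else 1)"
proof -
  have "{w. w < L \<and> E u w} \<subseteq> set (children u) \<union> (if u = r then {} else {parent u})"
    using neighbour_cases by auto
  then have "degree L E u \<le> card (set (children u) \<union> (if u = r then {} else {parent u}))"
    unfolding degree_def by (rule card_mono[rotated]) simp
  also have "\<dots> \<le> card (set (children u)) + (if u = r then 0 else 1)"
    by (simp add: card_insert_le_m1 card_Un_le)
  finally show ?thesis
    using distinct_card[OF distinct_children] by simp
qed

lemma height_eq_leaf_depth: "height = h" and height_pos: "0 < height"
proof -
  obtain u where u: "u < L" "depth u = height"
    using Max_in[of "depth ` {..<L}"] root unfolding height_def by fastforce
  have "children u = []"
    using depth_le_height u by (metis Suc_n_not_le_n edge_vertices list.set_sel(1) set_children)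
  moreover have "u \<noteq> r"
    using degree_le_children[of r] root_degree root calculation by auto
  ultimately have "is_leaf L E u"
    using degree_le_children[OF u(1)] inner_degree[OF u(1)] by (force simp: is_leaf_def)
  then show "height = h"
    using leaf_depth u root by (simp add: depth_def tree_dist_sym)
  show "0 < height"
    using u \<open>u \<noteq> r\<close> depth_eq_0_iff[OF u(1)] by simp
qed

lemma two_le_length_children:
  assumes "u < L" "depth u < height"
  shows "2 \<le> length (children u)"
proof (cases "u = r")
  case True
  then show ?thesis
    using degree_le_children[OF assms(1)] root_degree by simp
next
  case False
  have "\<not> is_leaf L E u"
    using leaf_depth[of u] assms height_eq_leaf_depth root by (auto simp: depth_def tree_dist_sym)
  then show ?thesis
    using degree_le_children[OF assms(1)] inner_degree[OF assms(1) False] False by simp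
qed

lemma card_level_Suc: "t < height \<Longrightarrow> 2 * card (level t) \<le> card (level (Suc t))"
proof -
  assume t: "t < height"
  have "2 * card (level t) = (\<Sum>u\<in>level t. 2)"
    by simp
  also have "\<dots> \<le> (\<Sum>u\<in>level t. card (set (children u)))"
    using two_le_length_children t
    by (intro sum_mono) (auto simp: level_def distinct_card[OF distinct_children])
  also have "\<dots> = card (\<Union>u\<in>level t. set (children u))"
    by (rule card_UN_disjoint[symmetric]) (auto simp: level_def dest: parent_child)
  also have "\<dots> \<le> card (level (Suc t))"
    by (rule card_mono) (auto simp: level_def set_children dest: edge_vertices)
  finally show ?thesis .
qed

lemma finite_level [simp]: "finite (level t)"
  by (simp add: level_def)

lemma level_0: "level 0 = {r}"
  using root depth_eq_0_iff by (auto simp: level_def)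

lemma card_level: "t \<le> height \<Longrightarrow> 2 ^ t \<le> card (level t)"
proof (induction t)
  case 0
  then show ?case by (simp add: level_0)
next
  case (Suc t)
  then show ?case
    using card_level_Suc[of t] by simp
qed

lemma two_pow_height_less: "2 ^ height < L"
proof -
  have "level 0 \<inter> level height = {}"
    using height_pos by (auto simp: level_def)
  moreover have "level 0 \<union> level height \<subseteq> {..<L}"
    by (auto simp: level_def)
  ultimately have "1 + card (level height) \<le> L"
    using card_mono[of "{..<L}" "level 0 \<union> level height"] card_Un_disjoint[of "level 0" "level height"]
    by (simp add: level_0)
  then show ?thesis
    using card_level[of height] by simp
qed

lemma tree_dist_le_twice_height: "v < L \<Longrightarrow> j < L \<Longrightarrow> tree_dist E v j \<le> 2 * height"
  using tree_dist_triangle[of v r j] depth_le_height[of v] depth_le_height[of j] root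
  by (simp add: depth_def tree_dist_sym)

end

section \<open>The fast matrix-vector product\<close>

lemma double_le_two_pow: "2 * n \<le> (2::nat) ^ n"
proof (induction n)
  case (Suc n)
  then show ?case by (cases n) auto
qed simp

datatype cell = Coef nat | Input nat | Down nat nat | Sphere nat nat | Output nat

fun input_addr :: "nat \<Rightarrow> cell \<Rightarrow> nat" where
  "input_addr L (Coef d) = d"
| "input_addr L (Input j) = L + j"
| "input_addr L _ = 0"

context balanced_tree
begin

definition num_dists :: nat where
  "num_dists = Suc (2 * height)"

lemma num_dists_le: "num_dists \<le> L"
  using two_pow_height_less double_le_two_pow[of height] by (simp add: num_dists_def)

lemma tree_dist_less_num_dists: "v < L \<Longrightarrow> j < L \<Longrightarrow> tree_dist E v j < num_dists"
  using tree_dist_le_twice_height by (simp add: num_dists_def less_Suc_eq_le)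

fun cell_value :: "(nat \<Rightarrow> real) \<Rightarrow> (nat \<Rightarrow> real) \<Rightarrow> cell \<Rightarrow> real" where
  "cell_value f x (Coef d) = f d"
| "cell_value f x (Input j) = x j"
| "cell_value f x (Down k v) = sum x (descendants_at k v)"
| "cell_value f x (Sphere d v) = sum x (tree_sphere d v)"
| "cell_value f x (Output v) = (\<Sum>j<L. f (tree_dist E v j) * x j)"

definition down_aexp :: "nat \<Rightarrow> nat \<Rightarrow> cell aexp" where
  "down_aexp k v =
     (if k = 0 then Var (Input v) else sum_aexp (map (\<lambda>c. Var (Down (k - 1) c)) (children v)))"

definition sphere_aexp :: "nat \<Rightarrow> nat \<Rightarrow> cell aexp" where
  "sphere_aexp d v =
     (if d = 0 then Var (Down 0 v)
      else if v = r then Var (Down d r)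
      else Bin BSub (Bin BAdd (Var (Down d v)) (Var (Sphere (d - 1) (parent v))))
             (if 2 \<le> d then Var (Down (d - 2) v) else Num 0))"

definition output_aexp :: "nat \<Rightarrow> cell aexp" where
  "output_aexp v = sum_aexp (map (\<lambda>d. Bin BMul (Var (Coef d)) (Var (Sphere d v))) [0..<num_dists])"

definition down_defs :: "nat \<Rightarrow> (cell \<times> cell aexp) list" where
  "down_defs k = map (\<lambda>v. (Down k v, down_aexp k v)) [0..<L]"

definition sphere_defs :: "nat \<Rightarrow> (cell \<times> cell aexp) list" where
  "sphere_defs d = map (\<lambda>v. (Sphere d v, sphere_aexp d v)) [0..<L]"

definition output_defs :: "(cell \<times> cell aexp) list" where
  "output_defs = map (\<lambda>v. (Output v, output_aexp v)) [0..<L]"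

definition matvec_defs :: "(cell \<times> cell aexp) list" where
  "matvec_defs = concat (map down_defs [0..<num_dists]) @ concat (map sphere_defs [0..<num_dists])
     @ output_defs"

definition input_cells :: "cell set" where
  "input_cells = Coef ` {..<L} \<union> Input ` {..<L}"

lemma weighted_sphere_sum:
  fixes f x :: "nat \<Rightarrow> 'a::semiring_0"
  assumes "v < L"
  shows "(\<Sum>d<num_dists. f d * sum x (tree_sphere d v)) = (\<Sum>j<L. f (tree_dist E v j) * x j)"
proof -
  have "(\<Sum>j<L. f (tree_dist E v j) * x j)
      = (\<Sum>d<num_dists. \<Sum>j\<in>{j. j \<in> {..<L} \<and> tree_dist E v j = d}. f (tree_dist E v j) * x j)"
    using tree_dist_less_num_dists[OF assms] by (intro sum.group[symmetric]) auto
  also have "\<dots> = (\<Sum>d<num_dists. f d * sum x (tree_sphere d v))"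
    by (simp add: tree_sphere_def sum_distrib_left)
  finally show ?thesis ..
qed

lemma eval_down_aexp:
  "v < L \<Longrightarrow> eval_aexp (cell_value f x) (down_aexp k v) = sum x (descendants_at k v)"
  by (cases k) (simp_all add: down_aexp_def descendants_at_0 sum_descendants_at_Suc comp_def)

lemma eval_sphere_aexp:
  "v < L \<Longrightarrow> eval_aexp (cell_value f x) (sphere_aexp d v) = sum x (tree_sphere d v)"
  using sum_tree_sphere_step[of v d x]
  by (auto simp: sphere_aexp_def descendants_at_0 tree_sphere_0 tree_sphere_root)

lemma eval_output_aexp:
  "v < L \<Longrightarrow> eval_aexp (cell_value f x) (output_aexp v) = (\<Sum>j<L. f (tree_dist E v j) * x j)"
  by (simp add: output_aexp_def comp_def interv_sum_list_conv_sum_set_nat atLeast0LessThan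
      weighted_sphere_sum)

lemma vars_down_aexp:
  "c \<in> vars_aexp (down_aexp k v) \<Longrightarrow> c = Input v \<or> (\<exists>w<L. 0 < k \<and> c = Down (k - 1) w)"
  by (auto simp: down_aexp_def set_children split: if_splits dest: edge_vertices)

lemma vars_sphere_aexp:
  "v < L \<Longrightarrow> c \<in> vars_aexp (sphere_aexp d v) \<Longrightarrow>
   (\<exists>k\<le>d. \<exists>w<L. c = Down k w) \<or> (\<exists>w<L. 0 < d \<and> c = Sphere (d - 1) w)"
  using parent(1) edge_vertices root
  by (auto simp: sphere_aexp_def split: if_splits) blast+

lemma vars_output_aexp:
  "c \<in> vars_aexp (output_aexp v) \<Longrightarrow> \<exists>d<num_dists. c = Coef d \<or> c = Sphere d v"
  by (auto simp: output_aexp_def)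

lemma keys_down_defs [simp]: "fst ` set (down_defs k) = (\<lambda>v. Down k v) ` {..<L}"
  by (force simp: down_defs_def)

lemma keys_sphere_defs [simp]: "fst ` set (sphere_defs d) = (\<lambda>v. Sphere d v) ` {..<L}"
  by (force simp: sphere_defs_def)

lemma down_defs_layer:
  assumes "(c, e) \<in> set (down_defs k)"
  shows "vars_aexp e \<subseteq> input_cells \<union> (\<Union>k'<k. fst ` set (down_defs k'))"
    and "eval_aexp (cell_value f x) e = cell_value f x c"
proof -
  obtain v where v: "v < L" "c = Down k v" "e = down_aexp k v"
    using assms by (auto simp: down_defs_def)
  show "vars_aexp e \<subseteq> input_cells \<union> (\<Union>k'<k. fst ` set (down_defs k'))"
  proof
    fix c' assume "c' \<in> vars_aexp e"
    then have "c' = Input v \<or> (\<exists>w<L. 0 < k \<and> c' = Down (k - 1) w)"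
      using v vars_down_aexp by simp
    then show "c' \<in> input_cells \<union> (\<Union>k'<k. fst ` set (down_defs k'))"
      using v(1) by (auto simp: input_cells_def)
  qed
  show "eval_aexp (cell_value f x) e = cell_value f x c"
    using v eval_down_aexp by simp
qed

lemma sphere_defs_layer:
  assumes "(c, e) \<in> set (sphere_defs d)" "d < num_dists"
  shows "vars_aexp e \<subseteq>
           {Down k w | k w. k < num_dists \<and> w < L} \<union> (\<Union>d'<d. fst ` set (sphere_defs d'))"
    and "eval_aexp (cell_value f x) e = cell_value f x c"
proof -
  obtain v where v: "v < L" "c = Sphere d v" "e = sphere_aexp d v"
    using assms by (auto simp: sphere_defs_def)
  show "vars_aexp e \<subseteq>
          {Down k w | k w. k < num_dists \<and> w < L} \<union> (\<Union>d'<d. fst ` set (sphere_defs d'))"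
  proof
    fix c' assume "c' \<in> vars_aexp e"
    then have "(\<exists>k\<le>d. \<exists>w<L. c' = Down k w) \<or> (\<exists>w<L. 0 < d \<and> c' = Sphere (d - 1) w)"
      using v vars_sphere_aexp by simp
    then show "c' \<in> {Down k w | k w. k < num_dists \<and> w < L} \<union> (\<Union>d'<d. fst ` set (sphere_defs d'))"
      using assms(2) by auto
  qed
  show "eval_aexp (cell_value f x) e = cell_value f x c"
    using v eval_sphere_aexp by simp
qed

lemma output_defs_valid:
  assumes "{Coef d | d. d < num_dists} \<union> {Sphere d v | d v. d < num_dists \<and> v < L} \<subseteq> K"
  shows "defs_valid (cell_value f x) K output_defs"
proof (rule defs_valid_independent, clarify)
  fix c e assume "(c, e) \<in> set output_defs"
  then obtain v where v: "v < L" "c = Output v" "e = output_aexp v"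
    by (auto simp: output_defs_def)
  have "vars_aexp (output_aexp v) \<subseteq> K"
  proof
    fix c' assume "c' \<in> vars_aexp (output_aexp v)"
    then obtain d where "d < num_dists" "c' = Coef d \<or> c' = Sphere d v"
      using vars_output_aexp by blast
    then show "c' \<in> K"
      using assms v(1) by blast
  qed
  then show "vars_aexp e \<subseteq> K \<and> eval_aexp (cell_value f x) e = cell_value f x c"
    using v eval_output_aexp by simp
qed

lemma matvec_defs_valid: "defs_valid (cell_value f x) input_cells matvec_defs"
proof -
  let ?g = "cell_value f x"
  define downs where "downs = concat (map down_defs [0..<num_dists])"
  define spheres where "spheres = concat (map sphere_defs [0..<num_dists])"
  have keys_downs: "fst ` set downs = {Down k v | k v. k < num_dists \<and> v < L}"
    by (auto simp: downs_def down_defs_def image_iff)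
  have keys_spheres: "fst ` set spheres = {Sphere d v | d v. d < num_dists \<and> v < L}"
    by (auto simp: spheres_def sphere_defs_def image_iff)
  have "defs_valid ?g input_cells downs"
    unfolding downs_def
    by (rule defs_valid_layers) (blast dest: down_defs_layer)
  moreover have "defs_valid ?g (input_cells \<union> fst ` set downs) spheres"
    unfolding spheres_def
  proof (rule defs_valid_layers, intro allI impI, clarify)
    fix d c e assume "d < num_dists" "(c, e) \<in> set (sphere_defs d)"
    from sphere_defs_layer[OF this(2,1)]
    show "vars_aexp e \<subseteq> input_cells \<union> fst ` set downs \<union> (\<Union>d'<d. fst ` set (sphere_defs d')) \<and>
          eval_aexp ?g e = ?g c"
      unfolding keys_downs by blast
  qed
  moreover have "defs_valid ?g (input_cells \<union> fst ` set downs \<union> fst ` set spheres) output_defs"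
  proof (rule output_defs_valid)
    show "{Coef d | d. d < num_dists} \<union> {Sphere d v | d v. d < num_dists \<and> v < L}
        \<subseteq> input_cells \<union> fst ` set downs \<union> fst ` set spheres"
      using num_dists_le unfolding keys_spheres input_cells_def by auto
  qed
  ultimately show ?thesis
    by (simp add: matvec_defs_def defs_valid_append downs_def spheres_def)
qed

lemma ops_down_aexp: "ops_aexp (down_aexp k v) \<le> length (children v) + 1"
  by (simp add: down_aexp_def comp_def sum_list_triv)

lemma ops_sphere_aexp: "ops_aexp (sphere_aexp d v) \<le> 3"
  by (simp add: sphere_aexp_def)

lemma ops_output_aexp: "ops_aexp (output_aexp v) = 2 * num_dists + 1"
  by (simp add: output_aexp_def comp_def sum_list_triv)

lemma ops_matvec_defs: "(\<Sum>(c, e)\<leftarrow>matvec_defs. ops_aexp e) \<le> 8 * num_dists * L"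
proof -
  have "(\<Sum>(c, e)\<leftarrow>down_defs k. ops_aexp e) \<le> 2 * L" for k
  proof -
    have "(\<Sum>(c, e)\<leftarrow>down_defs k. ops_aexp e) = (\<Sum>v<L. ops_aexp (down_aexp k v))"
      by (simp add: down_defs_def comp_def interv_sum_list_conv_sum_set_nat atLeast0LessThan)
    also have "\<dots> \<le> (\<Sum>v<L. length (children v) + 1)"
      by (intro sum_mono ops_down_aexp)
    also have "\<dots> = (\<Sum>v<L. length (children v)) + L"
      by (simp add: sum_Suc)
    also have "\<dots> \<le> 2 * L"
      using sum_length_children by simp
    finally show ?thesis .
  qed
  then have downs: "(\<Sum>(c, e)\<leftarrow>concat (map down_defs [0..<num_dists]). ops_aexp e) \<le> num_dists * (2 * L)"
    by (intro ops_layers_le) blast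
  have "(\<Sum>(c, e)\<leftarrow>sphere_defs d. ops_aexp e) \<le> 3 * L" for d
  proof -
    have "(\<Sum>(c, e)\<leftarrow>sphere_defs d. ops_aexp e) = (\<Sum>v<L. ops_aexp (sphere_aexp d v))"
      by (simp add: sphere_defs_def comp_def interv_sum_list_conv_sum_set_nat atLeast0LessThan)
    also have "\<dots> \<le> (\<Sum>v<L. 3)"
      by (intro sum_mono ops_sphere_aexp)
    finally show ?thesis by simp
  qed
  then have spheres: "(\<Sum>(c, e)\<leftarrow>concat (map sphere_defs [0..<num_dists]). ops_aexp e) \<le> num_dists * (3 * L)"
    by (intro ops_layers_le) blast
  have outputs: "(\<Sum>(c, e)\<leftarrow>output_defs. ops_aexp e) = (2 * num_dists + 1) * L"
    by (simp add: output_defs_def comp_def ops_output_aexp sum_list_triv)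
  have "(\<Sum>(c, e)\<leftarrow>matvec_defs. ops_aexp e)
      \<le> num_dists * (2 * L) + (num_dists * (3 * L) + (2 * num_dists + 1) * L)"
    unfolding matvec_defs_def map_append sum_list_append
    using downs spheres outputs by (intro add_mono) simp_all
  also have "\<dots> = 7 * (num_dists * L) + L"
    by (simp add: algebra_simps)
  also have "\<dots> \<le> 8 * num_dists * L"
    by (simp add: num_dists_def algebra_simps)
  finally show ?thesis .
qed

lemma num_dists_mult_le_log: "real (num_dists * L) \<le> 3 * real L * log 2 (real L)"
proof -
  have "real height \<le> log 2 (real L)"
    using two_pow_height_less le_log2_of_power[of height L] by simp
  moreover have "real num_dists \<le> 3 * real height"
    using height_pos by (simp add: num_dists_def)
  ultimately have "real num_dists \<le> 3 * log 2 (real L)"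
    by linarith
  from mult_left_mono[OF this, of "real L"] show ?thesis
    by (simp add: mult.assoc mult.commute)
qed

lemma matvec_program:
  "\<exists>p outs. real (length p) \<le> 24 * real L * log 2 (real L) \<and> length outs = L \<and>
     (\<forall>f x. let m = run p (map f [0..<L] @ map x [0..<L]) in
        \<forall>i<L. outs ! i < length m \<and> m ! (outs ! i) = (\<Sum>j<L. f (tree_dist E i j) * x j))"
proof -
  obtain p a where compiled: "compile_defs (input_addr L) (2 * L) matvec_defs = (p, a)"
    by fastforce
  have "length p \<le> 8 * num_dists * L"
    using length_compile_defs[of "input_addr L" "2 * L" matvec_defs] compiled ops_matvec_defs
    by simp
  then have cost: "real (length p) \<le> 24 * real L * log 2 (real L)"
    using num_dists_mult_le_log by (simp add: of_nat_le_iff[symmetric, where 'a=real])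
  have "m ! a (Output i) = (\<Sum>j<L. f (tree_dist E i j) * x j) \<and> a (Output i) < length m"
    if "m = run p (map f [0..<L] @ map x [0..<L])" "i < L" for f x m i
  proof -
    let ?m0 = "map f [0..<L] @ map x [0..<L]"
    have "compile_defs (input_addr L) (length ?m0) matvec_defs = (p, a)"
      using compiled by (simp add: mult_2)
    moreover have "\<forall>c\<in>input_cells. input_addr L c < length ?m0 \<and> ?m0 ! input_addr L c = cell_value f x c"
      by (auto simp: input_cells_def nth_append)
    ultimately have "\<forall>c\<in>input_cells \<union> fst ` set matvec_defs.
        a c < length m \<and> m ! a c = cell_value f x c"
      using run_compile_defs[OF _ _ matvec_defs_valid] that(1) by blast
    moreover have "Output i \<in> fst ` set matvec_defs"
      using \<open>i < L\<close> by (force simp: matvec_defs_def output_defs_def)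
    ultimately show ?thesis
      by auto
  qed
  then show ?thesis
    using cost by (intro exI[of _ p] exI[of _ "map (\<lambda>i. a (Output i)) [0..<L]"]) (simp add: Let_def)
qed

end

theorem corollary6p3:
  "\<exists>C::real. \<forall>L E. good_tree L E \<longrightarrow>
     (\<exists>(p::instr list) (outs::nat list).
        real (length p) \<le> C * real L * log 2 (real L) \<and>
        length outs = L \<and>
        (\<forall>(f::nat \<Rightarrow> real) (x::nat \<Rightarrow> real).
           let m = run p (map f [0..<L] @ map x [0..<L]) in
           (\<forall>i < L. outs ! i < length m \<and>
              m ! (outs ! i) = (\<Sum>j<L. f (tree_dist E i j) * x j))))"
proof (intro exI[of _ 24] allI impI)
  fix L E assume "good_tree L E"
  then obtain r h where "balanced_tree L E r h"
    unfolding good_tree_def by (auto simp: balanced_tree_def balanced_tree_axioms_def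
        rooted_tree_def rooted_tree_axioms_def tree_def)
  then show "\<exists>p outs. real (length p) \<le> 24 * real L * log 2 (real L) \<and> length outs = L \<and>
     (\<forall>f x. let m = run p (map f [0..<L] @ map x [0..<L]) in
        \<forall>i<L. outs ! i < length m \<and> m ! (outs ! i) = (\<Sum>j<L. f (tree_dist E i j) * x j))"
    by (rule balanced_tree.matvec_program)
qed

end
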